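(* Let $\nu\in\mathbb{R}$, let $J\subset(-\nu,\infty)$ be an open interval, and let $f:J\to\mathbb{R}$ be smooth. Let $q(u_1,u_2,u_3)$ be a smooth solution on $J^3$ of the system $$2(u_i-u_j)\frac{\partial^2 q}{\partial u_i\partial u_j}=\frac{\partial q}{\partial u_i}-\frac{\partial q}{\partial u_j}\quad(i,j=1,2,3),\qquad q(u,u,u)=f(u).$$ Put $\gamma=u_1+u_2+u_3+2\nu$ and define $$w_i=\big(\lambda_i(u_1,u_2,u_3)-\gamma\big)\frac{\partial q}{\partial u_i}+q,\qquad i=1,2,3.$$ Then on $\{u_3<u_2<u_1\}\cap J^3$ the functions $w_i$ satisfy $$\frac{\partial w_i}{\partial u_j}=B_{ij}(w_i-w_j),\qquad B_{ij}=\frac12\,\frac{(\lambda_i-\gamma)-2(u_i-u_j)}{(\lambda_j-\gamma)(u_i-u_j)},\quad i\neq j.$$ With the $\lambda_i$ (and hence the $w_i$) extended continuously to the boundary, the $w_i$ also satisfy the boundary conditions $$w_1(u_1,u_1,u_3)=w_2(u_1,u_1,u_3),\qquad w_3(u_1,u_1,u_3)=f(u_3),$$ $$w_1(u_1,u_3,u_3)=f(u_1),\qquad w_2(u_1,u_3,u_3)=w_3(u_1,u_3,u_3).$$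
   Context: For $-\nu<u_3<u_2<u_1$ define $$I(u_1,u_2,u_3)=\int_{u_3}^{u_2}\frac{\eta+\nu}{\sqrt{(\eta+\nu)(u_1-\eta)(u_2-\eta)(\eta-u_3)}}\,d\eta,$$ and for $i=1,2,3$ $$\lambda_i=u_1+u_2+u_3+2\nu-\frac{I}{\partial I/\partial u_i}.$$ These functions extend continuously to the boundary of their domain: - on $u_2=u_3<u_1$: $\lambda_1=3u_1+2\nu$ and $\lambda_2=\lambda_3=u_1+2u_3+2\nu-4(u_3+\nu)(u_1-u_3)/(u_1+\nu)$; - on $u_1=u_2>u_3$: $\lambda_1=\lambda_2=2u_1+u_3+2\nu$ and $\lambda_3=3u_3+2\nu$. The boundary value problem for $q$ is known to have a unique solution, which is symmetric in $u_1,u_2,u_3$. It is given explicitly by $$q(u_1,u_2,u_3)=\frac{1}{2\sqrt2\,\pi}\int_{-1}^1\int_{-1}^1\frac{f\big(\tfrac{1+\mu}{2}\tfrac{1+\tau}{2}u_1+\tfrac{1+\mu}{2}\tfrac{1-\tau}{2}u_2+\tfrac{1-\mu}{2}u_3\big)}{\sqrt{(1-\mu)(1-\tau^2)}}\,d\mu\,d\tau.$$ *)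

theory Defs
  imports "HOL-Analysis.Analysis"
begin

definition pd :: "3 \<Rightarrow> (real^3 \<Rightarrow> real) \<Rightarrow> real^3 \<Rightarrow> real" where
  "pd i g x = deriv (\<lambda>t. g (x + t *\<^sub>R axis i 1)) 0"

definition iter_pd :: "3 list \<Rightarrow> (real^3 \<Rightarrow> real) \<Rightarrow> real^3 \<Rightarrow> real" where
  "iter_pd is g = foldr pd is g"

definition smooth3_on :: "(real^3) set \<Rightarrow> (real^3 \<Rightarrow> real) \<Rightarrow> bool" where
  "smooth3_on S g \<longleftrightarrow>
     (\<forall>is. continuous_on S (iter_pd is g) \<and>
        (\<forall>i. \<forall>x\<in>S. ((\<lambda>t. iter_pd is g (x + t *\<^sub>R axis i 1))
                         has_real_derivative iter_pd (i # is) g x) (at 0)))"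

definition smooth_on_real :: "real set \<Rightarrow> (real \<Rightarrow> real) \<Rightarrow> bool" where
  "smooth_on_real S f \<longleftrightarrow>
     (\<forall>n. \<forall>x\<in>S. ((deriv ^^ n) f has_real_derivative (deriv ^^ Suc n) f x) (at x))"

definition cube :: "real set \<Rightarrow> (real^3) set" where
  "cube J = {u. \<forall>i. u $ i \<in> J}"

definition Iint :: "real \<Rightarrow> real^3 \<Rightarrow> real" where
  "Iint \<nu> u = integral {u$3..u$2}
     (\<lambda>\<eta>. (\<eta> + \<nu>) / sqrt ((\<eta> + \<nu>) * (u$1 - \<eta>) * (u$2 - \<eta>) * (\<eta> - u$3)))"

definition gam :: "real \<Rightarrow> real^3 \<Rightarrow> real" where
  "gam \<nu> u = u$1 + u$2 + u$3 + 2 * \<nu>"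

text \<open>lambda_i on the open domain -nu < u3 < u2 < u1.\<close>
definition lam :: "real \<Rightarrow> 3 \<Rightarrow> real^3 \<Rightarrow> real" where
  "lam \<nu> i u = gam \<nu> u - Iint \<nu> u / pd i (Iint \<nu>) u"

definition lam_ext :: "real \<Rightarrow> 3 \<Rightarrow> real^3 \<Rightarrow> real" where
  "lam_ext \<nu> i u =
    (if u$3 < u$2 \<and> u$2 < u$1 then lam \<nu> i u
     else if u$2 = u$3 \<and> u$3 < u$1 then
       (if i = 1 then 3 * u$1 + 2 * \<nu>
        else u$1 + 2 * u$3 + 2 * \<nu> - 4 * (u$3 + \<nu>) * (u$1 - u$3) / (u$1 + \<nu>))
     else if u$1 = u$2 \<and> u$3 < u$1 then
       (if i = 3 then 3 * u$3 + 2 * \<nu> else 2 * u$1 + u$3 + 2 * \<nu>)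
     else undefined)"

definition wfun :: "real \<Rightarrow> (real^3 \<Rightarrow> real) \<Rightarrow> 3 \<Rightarrow> real^3 \<Rightarrow> real" where
  "wfun \<nu> q i u = (lam_ext \<nu> i u - gam \<nu> u) * pd i q u + q u"

definition Bcoef :: "real \<Rightarrow> 3 \<Rightarrow> 3 \<Rightarrow> real^3 \<Rightarrow> real" where
  "Bcoef \<nu> i j u = (1/2) * ((lam \<nu> i u - gam \<nu> u) - 2 * (u$i - u$j))
                          / ((lam \<nu> j u - gam \<nu> u) * (u$i - u$j))"

end

theory Submission
  imports Defs
begin

(*
  Write a = u1, b = u2, c = u3.  The substitution eta = c cos^2 theta + b sin^2 theta turns I into
  the integral over [0, pi/2] of kern(a, eta) = 2 sqrt(eta + nu) / sqrt(a - eta), an integral over a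
  fixed interval that can be differentiated under the integral sign.  Integrating exact
  theta-derivatives (of sin theta cos theta times a kernel) shows that I solves the same
  Euler-Poisson-Darboux system 2 (u_i - u_j) d_i d_j I = d_i I - d_j I as q.  Since
  lambda_i - gamma = - I / d_i I, we have w_i = q - (I / d_i I) d_i q; differentiating along u_j and
  eliminating the mixed derivatives of I and of q by their EPD equations gives
  d_j w_i = B_ij (w_i - w_j).  Positivity of I and d_2 I, d_3 I and negativity of d_1 I keep all
  quotients meaningful.

  On the face u1 = u2 the extended lambda_3 gives w_3 = q + 2 (u3 - u1) d_3 q, and the EPD
  equations make this combination constant along the diagonal direction e_1 + e_2, so it equals
  its value q(u3, u3, u3) = f(u3) on the diagonal; the face u2 = u3 is symmetric.  The two remaining
  boundary identities are immediate (on u2 = u3 because d_2 q = d_3 q there).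
*)

definition kern :: "real \<Rightarrow> real \<Rightarrow> real \<Rightarrow> real" where
  "kern \<nu> a x = 2 * sqrt (x + \<nu>) / sqrt (a - x)"
definition kern_a :: "real \<Rightarrow> real \<Rightarrow> real \<Rightarrow> real" where
  "kern_a \<nu> a x = - sqrt (x + \<nu>) / sqrt (a - x) ^ 3"
definition kern_x :: "real \<Rightarrow> real \<Rightarrow> real \<Rightarrow> real" where
  "kern_x \<nu> a x = 1 / (sqrt (x + \<nu>) * sqrt (a - x)) + sqrt (x + \<nu>) / sqrt (a - x) ^ 3"
definition kern_ax :: "real \<Rightarrow> real \<Rightarrow> real \<Rightarrow> real" where
  "kern_ax \<nu> a x = - 1 / (2 * sqrt (x + \<nu>) * sqrt (a - x) ^ 3) - 3 * sqrt (x + \<nu>) / (2 * sqrt (a - x) ^ 5)"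
definition kern_xx :: "real \<Rightarrow> real \<Rightarrow> real \<Rightarrow> real" where
  "kern_xx \<nu> a x = - 1 / (2 * sqrt (x + \<nu>) ^ 3 * sqrt (a - x)) + 1 / (sqrt (x + \<nu>) * sqrt (a - x) ^ 3)
     + 3 * sqrt (x + \<nu>) / (2 * sqrt (a - x) ^ 5)"

definition kern_domain :: "real \<Rightarrow> (real \<times> real) set" where
  "kern_domain \<nu> = {(a, x). -\<nu> < x \<and> x < a}"

lemma kern_derivatives:
  assumes "(a, x) \<in> kern_domain \<nu>"
  shows "((\<lambda>a. kern \<nu> a x) has_real_derivative kern_a \<nu> a x) (at a)"
    and "((\<lambda>x. kern \<nu> a x) has_real_derivative kern_x \<nu> a x) (at x)"
    and "((\<lambda>x. kern_a \<nu> a x) has_real_derivative kern_ax \<nu> a x) (at x)"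
    and "((\<lambda>a. kern_x \<nu> a x) has_real_derivative kern_ax \<nu> a x) (at a)"
    and "((\<lambda>x. kern_x \<nu> a x) has_real_derivative kern_xx \<nu> a x) (at x)"
proof -
  define r where "r = sqrt (x + \<nu>)"
  define t where "t = sqrt (a - x)"
  have r: "r > 0" "x + \<nu> = r\<^sup>2" and t: "t > 0" "a - x = t\<^sup>2"
    using assms by (auto simp: kern_domain_def r_def t_def)
  have *: "x + \<nu> > 0" "a - x > 0" using assms by (auto simp: kern_domain_def)
  note defs = kern_def kern_a_def kern_x_def kern_ax_def kern_xx_def
  note sqrt_abbrevs = r_def[symmetric] t_def[symmetric]
  show "((\<lambda>a. kern \<nu> a x) has_real_derivative kern_a \<nu> a x) (at a)"
    unfolding defs by (insert *, (rule derivative_eq_intros refl | simp)+)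
      (simp only: sqrt_abbrevs, use r t in \<open>simp add: field_simps power_def\<close>)
  show "((\<lambda>x. kern \<nu> a x) has_real_derivative kern_x \<nu> a x) (at x)"
    unfolding defs by (insert *, (rule derivative_eq_intros refl | simp)+)
      (simp only: sqrt_abbrevs, use r t in \<open>simp add: field_simps power_def\<close>)
  show "((\<lambda>x. kern_a \<nu> a x) has_real_derivative kern_ax \<nu> a x) (at x)"
    unfolding defs by (insert *, (rule derivative_eq_intros refl | simp)+)
      (simp only: sqrt_abbrevs, use r t in \<open>simp add: field_simps power_def\<close>)
  show "((\<lambda>a. kern_x \<nu> a x) has_real_derivative kern_ax \<nu> a x) (at a)"
    unfolding defs by (insert *, (rule derivative_eq_intros refl | simp)+)
      (simp only: sqrt_abbrevs, use r t in \<open>simp add: field_simps power_def\<close>)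
  show "((\<lambda>x. kern_x \<nu> a x) has_real_derivative kern_xx \<nu> a x) (at x)"
    unfolding defs by (insert *, (rule derivative_eq_intros refl | simp)+)
      (simp only: sqrt_abbrevs, use r t in \<open>simp add: field_simps power_def\<close>)
qed

text \<open>The kernel solves a first order PDE in (a, x); this is what makes the EPD
  equations involving u1 hold.\<close>
lemma kern_pde:
  assumes "(a, x) \<in> kern_domain \<nu>"
  shows "2 * (a - x) * kern_ax \<nu> a x - 2 * kern_a \<nu> a x + kern_x \<nu> a x = 0"
proof -
  define r where "r = sqrt (x + \<nu>)"
  define t where "t = sqrt (a - x)"
  have r: "r > 0" and t: "t > 0" "a - x = t\<^sup>2"
    using assms by (auto simp: kern_domain_def r_def t_def)
  show ?thesis
    unfolding kern_ax_def kern_a_def kern_x_def r_def[symmetric] t_def[symmetric] t(2)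
    using r t by (simp add: field_simps power_def)
qed

lemma continuous_on_kernels:
  "continuous_on (kern_domain \<nu>) (case_prod (kern \<nu>))"
  "continuous_on (kern_domain \<nu>) (case_prod (kern_a \<nu>))"
  "continuous_on (kern_domain \<nu>) (case_prod (kern_x \<nu>))"
  "continuous_on (kern_domain \<nu>) (case_prod (kern_ax \<nu>))"
  "continuous_on (kern_domain \<nu>) (case_prod (kern_xx \<nu>))"
  unfolding kern_def kern_a_def kern_x_def kern_ax_def kern_xx_def kern_domain_def split_beta'
  by (intro continuous_intros; auto)+

lemma kern_signs:
  assumes "(a, x) \<in> kern_domain \<nu>"
  shows "kern \<nu> a x > 0" "kern_a \<nu> a x < 0" "kern_x \<nu> a x > 0"
  using assms unfolding kern_domain_def kern_def kern_a_def kern_x_def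
  by (auto intro!: divide_pos_pos add_pos_pos)

definition eta :: "real \<Rightarrow> real \<Rightarrow> real \<Rightarrow> real" where
  "eta b c \<theta> = c * cos \<theta> ^ 2 + b * sin \<theta> ^ 2"

lemma eta_eq: "eta b c \<theta> = c + (b - c) * sin \<theta> ^ 2"
  unfolding eta_def by (simp add: cos_squared_eq algebra_simps)

lemma eta_bounds:
  assumes "c \<le> b"
  shows "c \<le> eta b c \<theta>" "eta b c \<theta> \<le> b"
proof -
  have "0 \<le> sin \<theta> ^ 2" "sin \<theta> ^ 2 \<le> 1" by (auto simp: abs_square_le_1)
  then have "0 \<le> (b - c) * sin \<theta> ^ 2" "(b - c) * sin \<theta> ^ 2 \<le> b - c"
    using assms mult_left_mono[of "sin \<theta> ^ 2" 1 "b - c"] by auto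
  then show "c \<le> eta b c \<theta>" "eta b c \<theta> \<le> b" unfolding eta_eq by linarith+
qed

lemma eta_in_kern_domain: "-\<nu> < c \<Longrightarrow> c \<le> b \<Longrightarrow> b < a \<Longrightarrow> (a, eta b c \<theta>) \<in> kern_domain \<nu>"
  using eta_bounds[of c b \<theta>] by (auto simp: kern_domain_def)

lemma eta_derivatives:
  "((\<lambda>b. eta b c \<theta>) has_real_derivative sin \<theta> ^ 2) (at b)"
  "((\<lambda>c. eta b c \<theta>) has_real_derivative cos \<theta> ^ 2) (at c)"
  "((\<lambda>\<theta>. eta b c \<theta>) has_real_derivative 2 * (b - c) * sin \<theta> * cos \<theta>) (at \<theta>)"
  unfolding eta_def by (rule derivative_eq_intros refl | simp add: algebra_simps)+

definition theta_integral ::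
    "(real \<Rightarrow> real) \<Rightarrow> (real \<Rightarrow> real \<Rightarrow> real) \<Rightarrow> real \<Rightarrow> real \<Rightarrow> real \<Rightarrow> real" where
  "theta_integral s k a b c = integral {0..pi/2} (\<lambda>\<theta>. s \<theta> * k a (eta b c \<theta>))"

lemma continuous_on_theta_integrand_family:
  fixes A B C :: "'a::t2_space \<Rightarrow> real" and s :: "real \<Rightarrow> real" and k :: "real \<Rightarrow> real \<Rightarrow> real"
  assumes s: "continuous_on {0..pi/2} s" and k: "continuous_on (kern_domain \<nu>) (case_prod k)"
    and ABC: "continuous_on U A" "continuous_on U B" "continuous_on U C"
    and ord: "\<And>p. p \<in> U \<Longrightarrow> -\<nu> < C p \<and> C p \<le> B p \<and> B p < A p"
  shows "continuous_on (U \<times> {0..pi/2}) (\<lambda>p. s (snd p) * k (A (fst p)) (eta (B (fst p)) (C (fst p)) (snd p)))"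
proof -
  have fst: "continuous_on (U \<times> {0..pi/2}) (\<lambda>p. F (fst p))" if "continuous_on U F" for F :: "'a \<Rightarrow> real"
    by (rule continuous_on_compose2[OF that continuous_on_fst[OF continuous_on_id]]) auto
  have "continuous_on (U \<times> {0..pi/2}) (\<lambda>p. (A (fst p), eta (B (fst p)) (C (fst p)) (snd p)))"
    unfolding eta_def by (intro continuous_intros fst ABC)
  moreover have "(\<lambda>p. (A (fst p), eta (B (fst p)) (C (fst p)) (snd p))) ` (U \<times> {0..pi/2}) \<subseteq> kern_domain \<nu>"
    using ord eta_in_kern_domain by force
  ultimately have ck: "continuous_on (U \<times> {0..pi/2})
      (\<lambda>p. case_prod k (A (fst p), eta (B (fst p)) (C (fst p)) (snd p)))"
    by (rule continuous_on_compose2[OF k])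
  have cs: "continuous_on (U \<times> {0..pi/2}) (\<lambda>p. s (snd p))"
    by (rule continuous_on_compose2[OF s]) (auto intro: continuous_intros)
  show ?thesis using continuous_on_mult[OF cs ck] by simp
qed

lemma has_real_derivative_integral_param:
  fixes F F' :: "real \<Rightarrow> real \<Rightarrow> real"
  assumes U: "open U" "convex U" "x \<in> U"
    and F': "\<And>x t. x \<in> U \<Longrightarrow> t \<in> {a..b} \<Longrightarrow> ((\<lambda>x. F x t) has_real_derivative F' x t) (at x)"
    and cF: "continuous_on (U \<times> {a..b}) (\<lambda>p. F (fst p) (snd p))"
    and cF': "continuous_on (U \<times> {a..b}) (\<lambda>p. F' (fst p) (snd p))"
  shows "((\<lambda>x. integral {a..b} (F x)) has_real_derivative integral {a..b} (F' x)) (at x)"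
proof -
  have "F y integrable_on cbox a b" if "y \<in> U" for y
  proof -
    have "continuous_on {a..b} (\<lambda>t. F (fst (y, t)) (snd (y, t)))"
      by (rule continuous_on_compose2[OF cF]) (use that in \<open>auto intro: continuous_intros\<close>)
    then show ?thesis by (simp add: integrable_continuous_real)
  qed
  moreover have "((\<lambda>x. F x t) has_field_derivative F' y t) (at y within U)"
    if "y \<in> U" "t \<in> cbox a b" for y t
    using F'[of y t] that by (simp add: has_field_derivative_at_within)
  moreover have "continuous_on (U \<times> cbox a b) (\<lambda>(x, t). F' x t)"
    using cF' by (simp add: split_beta')
  ultimately have "((\<lambda>x. integral (cbox a b) (F x)) has_real_derivative integral (cbox a b) (F' x))
      (at x within U)"
    using leibniz_rule_field_derivative[OF _ _ _ U(3,2)] by blast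
  then show ?thesis by (simp only: at_within_open[OF U(3,1)] cbox_interval)
qed

context
  fixes \<nu> :: real and s :: "real \<Rightarrow> real" and k k' :: "real \<Rightarrow> real \<Rightarrow> real"
  assumes s: "continuous_on {0..pi/2} s"
    and k: "continuous_on (kern_domain \<nu>) (case_prod k)"
    and k': "continuous_on (kern_domain \<nu>) (case_prod k')"
begin

lemma has_real_derivative_theta_integral_a:
  assumes dk: "\<And>a x. (a, x) \<in> kern_domain \<nu> \<Longrightarrow> ((\<lambda>a. k a x) has_real_derivative k' a x) (at a)"
    and ord: "-\<nu> < c" "c < b" "b < a"
  shows "((\<lambda>a. theta_integral s k a b c) has_real_derivative theta_integral s k' a b c) (at a)"
  unfolding theta_integral_def
proof (rule has_real_derivative_integral_param[where U = "{b<..}"])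
  fix a' \<theta> assume "a' \<in> {b<..}"
  then show "((\<lambda>a. s \<theta> * k a (eta b c \<theta>)) has_real_derivative s \<theta> * k' a' (eta b c \<theta>)) (at a')"
    using ord by (intro DERIV_cmult dk eta_in_kern_domain) auto
next
  show "continuous_on ({b<..} \<times> {0..pi/2}) (\<lambda>p. s (snd p) * k (fst p) (eta b c (snd p)))"
    by (rule continuous_on_theta_integrand_family[OF s k, where A = "\<lambda>a. a"])
       (use ord in \<open>auto intro: continuous_intros\<close>)
  show "continuous_on ({b<..} \<times> {0..pi/2}) (\<lambda>p. s (snd p) * k' (fst p) (eta b c (snd p)))"
    by (rule continuous_on_theta_integrand_family[OF s k', where A = "\<lambda>a. a"])
       (use ord in \<open>auto intro: continuous_intros\<close>)
qed (use ord in auto)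

lemma has_real_derivative_theta_integral_b:
  assumes dk: "\<And>a x. (a, x) \<in> kern_domain \<nu> \<Longrightarrow> ((\<lambda>x. k a x) has_real_derivative k' a x) (at x)"
    and ord: "-\<nu> < c" "c < b" "b < a"
  shows "((\<lambda>b. theta_integral s k a b c) has_real_derivative
           theta_integral (\<lambda>\<theta>. s \<theta> * sin \<theta> ^ 2) k' a b c) (at b)"
  unfolding theta_integral_def
proof (rule has_real_derivative_integral_param[where U = "{c<..<a}"])
  fix b' \<theta> assume "b' \<in> {c<..<a}"
  then show "((\<lambda>b. s \<theta> * k a (eta b c \<theta>)) has_real_derivative s \<theta> * sin \<theta> ^ 2 * k' a (eta b' c \<theta>)) (at b')"
    using ord
    by (intro DERIV_cong[OF DERIV_cmult[OF DERIV_chain2[OF dk eta_derivatives(1)]]] eta_in_kern_domain) auto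
next
  show "continuous_on ({c<..<a} \<times> {0..pi/2}) (\<lambda>p. s (snd p) * k a (eta (fst p) c (snd p)))"
    by (rule continuous_on_theta_integrand_family[OF s k, where B = "\<lambda>b. b"])
       (use ord in \<open>auto intro: continuous_intros\<close>)
  show "continuous_on ({c<..<a} \<times> {0..pi/2}) (\<lambda>p. s (snd p) * sin (snd p) ^ 2 * k' a (eta (fst p) c (snd p)))"
    by (rule continuous_on_theta_integrand_family[OF _ k', where B = "\<lambda>b. b"])
       (use ord in \<open>auto intro!: continuous_on_mult[OF s] continuous_intros\<close>)
qed (use ord in auto)

lemma has_real_derivative_theta_integral_c:
  assumes dk: "\<And>a x. (a, x) \<in> kern_domain \<nu> \<Longrightarrow> ((\<lambda>x. k a x) has_real_derivative k' a x) (at x)"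
    and ord: "-\<nu> < c" "c < b" "b < a"
  shows "((\<lambda>c. theta_integral s k a b c) has_real_derivative
           theta_integral (\<lambda>\<theta>. s \<theta> * cos \<theta> ^ 2) k' a b c) (at c)"
  unfolding theta_integral_def
proof (rule has_real_derivative_integral_param[where U = "{-\<nu><..<b}"])
  fix c' \<theta> assume "c' \<in> {-\<nu><..<b}"
  then show "((\<lambda>c. s \<theta> * k a (eta b c \<theta>)) has_real_derivative s \<theta> * cos \<theta> ^ 2 * k' a (eta b c' \<theta>)) (at c')"
    using ord
    by (intro DERIV_cong[OF DERIV_cmult[OF DERIV_chain2[OF dk eta_derivatives(2)]]] eta_in_kern_domain) auto
next
  show "continuous_on ({-\<nu><..<b} \<times> {0..pi/2}) (\<lambda>p. s (snd p) * k a (eta b (fst p) (snd p)))"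
    by (rule continuous_on_theta_integrand_family[OF s k, where C = "\<lambda>c. c"])
       (use ord in \<open>auto intro: continuous_intros\<close>)
  show "continuous_on ({-\<nu><..<b} \<times> {0..pi/2}) (\<lambda>p. s (snd p) * cos (snd p) ^ 2 * k' a (eta b (fst p) (snd p)))"
    by (rule continuous_on_theta_integrand_family[OF _ k', where C = "\<lambda>c. c"])
       (use ord in \<open>auto intro!: continuous_on_mult[OF s] continuous_intros\<close>)
qed (use ord in auto)

end

lemma continuous_on_theta_integrand:
  fixes s :: "real \<Rightarrow> real" and k :: "real \<Rightarrow> real \<Rightarrow> real"
  assumes s: "continuous_on {0..pi/2} s" and k: "continuous_on (kern_domain \<nu>) (case_prod k)"
    and ord: "-\<nu> < c" "c \<le> b" "b < a"
  shows "continuous_on {0..pi/2} (\<lambda>\<theta>. s \<theta> * k a (eta b c \<theta>))"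
proof -
  have "continuous_on {0..pi/2} (\<lambda>\<theta>. case_prod k (a, eta b c \<theta>))"
    by (rule continuous_on_compose2[OF k])
       (use ord eta_in_kern_domain in \<open>auto simp: eta_def intro!: continuous_intros\<close>)
  then show ?thesis
    using continuous_on_mult[OF s] by simp
qed

lemma has_integral_theta_integral:
  assumes "continuous_on {0..pi/2} s" "continuous_on (kern_domain \<nu>) (case_prod k)"
    "-\<nu> < c" "c \<le> b" "b < a"
  shows "((\<lambda>\<theta>. s \<theta> * k a (eta b c \<theta>)) has_integral theta_integral s k a b c) {0..pi/2}"
  unfolding theta_integral_def
  by (rule integrable_integral[OF integrable_continuous_real[OF continuous_on_theta_integrand[OF assms]]])

lemma theta_integral_cmult: "theta_integral (\<lambda>\<theta>. C * s \<theta>) k a b c = C * theta_integral s k a b c"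
  by (simp add: theta_integral_def mult.assoc)

lemma theta_integral_sum_eq_0:
  assumes s: "continuous_on {0..pi/2} s1" "continuous_on {0..pi/2} s2" "continuous_on {0..pi/2} s3"
    and k: "continuous_on (kern_domain \<nu>) (case_prod k1)" "continuous_on (kern_domain \<nu>) (case_prod k2)"
      "continuous_on (kern_domain \<nu>) (case_prod k3)"
    and ord: "-\<nu> < c" "c \<le> b" "b < a"
    and T: "\<And>\<theta>. (T has_real_derivative
               s1 \<theta> * k1 a (eta b c \<theta>) + s2 \<theta> * k2 a (eta b c \<theta>) + s3 \<theta> * k3 a (eta b c \<theta>)) (at \<theta>)"
      "T 0 = 0" "T (pi/2) = 0"
  shows "theta_integral s1 k1 a b c + theta_integral s2 k2 a b c + theta_integral s3 k3 a b c = 0"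
proof -
  let ?E = "\<lambda>\<theta>. s1 \<theta> * k1 a (eta b c \<theta>) + s2 \<theta> * k2 a (eta b c \<theta>) + s3 \<theta> * k3 a (eta b c \<theta>)"
  have "(?E has_integral (T (pi/2) - T 0)) {0..pi/2}"
    by (rule fundamental_theorem_of_calculus)
       (auto simp: has_real_derivative_iff_has_vector_derivative[symmetric]
             intro: has_field_derivative_at_within T(1))
  moreover have "(?E has_integral theta_integral s1 k1 a b c + theta_integral s2 k2 a b c
                   + theta_integral s3 k3 a b c) {0..pi/2}"
    by (intro has_integral_add has_integral_theta_integral[OF s(1) k(1) ord]
        has_integral_theta_integral[OF s(2) k(2) ord] has_integral_theta_integral[OF s(3) k(3) ord])
  ultimately show ?thesis
    using T(2,3) by (simp add: has_integral_unique)
qed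

context
  fixes \<nu> a b c :: real
  assumes ord: "-\<nu> < c" "c < b" "b < a"
begin

lemma theta_integral_epd_bc:
  assumes g: "continuous_on (kern_domain \<nu>) (case_prod g)" and g': "continuous_on (kern_domain \<nu>) (case_prod g')"
    and dg: "\<And>a x. (a, x) \<in> kern_domain \<nu> \<Longrightarrow> ((\<lambda>x. g a x) has_real_derivative g' a x) (at x)"
  shows "2 * (b - c) * theta_integral (\<lambda>\<theta>. sin \<theta> ^ 2 * cos \<theta> ^ 2) g' a b c
           = theta_integral (\<lambda>\<theta>. sin \<theta> ^ 2) g a b c - theta_integral (\<lambda>\<theta>. cos \<theta> ^ 2) g a b c"
proof -
  let ?g = "\<lambda>\<theta>. g a (eta b c \<theta>)"
  have "theta_integral (\<lambda>\<theta>. 2 * (b - c) * (sin \<theta> ^ 2 * cos \<theta> ^ 2)) g' a b c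
      + theta_integral (\<lambda>\<theta>. -1 * sin \<theta> ^ 2) g a b c + theta_integral (\<lambda>\<theta>. cos \<theta> ^ 2) g a b c = 0"
  proof (rule theta_integral_sum_eq_0[OF _ _ _ g' g g])
    show "((\<lambda>\<theta>. sin \<theta> * cos \<theta> * ?g \<theta>) has_real_derivative
        2 * (b - c) * (sin \<theta> ^ 2 * cos \<theta> ^ 2) * g' a (eta b c \<theta>)
        + -1 * sin \<theta> ^ 2 * ?g \<theta> + cos \<theta> ^ 2 * ?g \<theta>) (at \<theta>)" for \<theta>
      using ord
      by (intro DERIV_cong[OF DERIV_mult[OF DERIV_mult[OF DERIV_sin DERIV_cos]
            DERIV_chain2[OF dg eta_derivatives(3)]]] eta_in_kern_domain)
         (auto simp: algebra_simps power2_eq_square)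
  qed (use ord in \<open>auto intro!: continuous_intros\<close>)
  then show ?thesis unfolding theta_integral_cmult by simp
qed

context
  fixes ka kx kax :: "real \<Rightarrow> real \<Rightarrow> real"
  assumes ka: "continuous_on (kern_domain \<nu>) (case_prod ka)"
    and kx: "continuous_on (kern_domain \<nu>) (case_prod kx)"
    and kax: "continuous_on (kern_domain \<nu>) (case_prod kax)"
    and dka: "\<And>a x. (a, x) \<in> kern_domain \<nu> \<Longrightarrow> ((\<lambda>x. ka a x) has_real_derivative kax a x) (at x)"
    and pde: "\<And>a x. (a, x) \<in> kern_domain \<nu> \<Longrightarrow> 2 * (a - x) * kax a x - 2 * ka a x + kx a x = 0"
begin

lemma kx_eta_eq:
  "kx a (eta b c \<theta>) = 2 * ka a (eta b c \<theta>) - 2 * (a - c - (b - c) * sin \<theta> ^ 2) * kax a (eta b c \<theta>)"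
  using pde[OF eta_in_kern_domain[OF ord(1) less_imp_le[OF ord(2)] ord(3)], of \<theta>]
  unfolding eta_eq by (simp add: algebra_simps)

lemma has_real_derivative_sin_cos_ka:
  "((\<lambda>\<theta>. sin \<theta> * cos \<theta> * ka a (eta b c \<theta>)) has_real_derivative
      (cos \<theta> ^ 2 - sin \<theta> ^ 2) * ka a (eta b c \<theta>)
      + 2 * (b - c) * sin \<theta> ^ 2 * cos \<theta> ^ 2 * kax a (eta b c \<theta>)) (at \<theta>)"
  by (rule DERIV_cong[OF DERIV_mult[OF DERIV_mult[OF DERIV_sin DERIV_cos]
        DERIV_chain2[OF dka[OF eta_in_kern_domain[OF ord(1) less_imp_le[OF ord(2)] ord(3)]] eta_derivatives(3)]]])
     (simp add: algebra_simps power2_eq_square)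

lemma theta_integral_epd_ab:
  "2 * (a - b) * theta_integral (\<lambda>\<theta>. sin \<theta> ^ 2) kax a b c
     = theta_integral (\<lambda>_. 1) ka a b c - theta_integral (\<lambda>\<theta>. sin \<theta> ^ 2) kx a b c"
proof -
  have "theta_integral (\<lambda>\<theta>. 2 * (a - b) * sin \<theta> ^ 2) kax a b c
      + theta_integral (\<lambda>_. -1 * 1) ka a b c + theta_integral (\<lambda>\<theta>. sin \<theta> ^ 2) kx a b c = 0"
  proof (rule theta_integral_sum_eq_0[OF _ _ _ kax ka kx])
    show "((\<lambda>\<theta>. - (sin \<theta> * cos \<theta> * ka a (eta b c \<theta>))) has_real_derivative
        2 * (a - b) * sin \<theta> ^ 2 * kax a (eta b c \<theta>) + -1 * 1 * ka a (eta b c \<theta>)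
        + sin \<theta> ^ 2 * kx a (eta b c \<theta>)) (at \<theta>)" for \<theta>
      using DERIV_minus[OF has_real_derivative_sin_cos_ka] unfolding kx_eta_eq
      by (rule DERIV_cong) (insert sin_cos_squared_add[of \<theta>], algebra)
  qed (use ord in \<open>auto intro!: continuous_intros\<close>)
  then show ?thesis unfolding theta_integral_cmult by simp
qed

lemma theta_integral_epd_ac:
  "2 * (a - c) * theta_integral (\<lambda>\<theta>. cos \<theta> ^ 2) kax a b c
     = theta_integral (\<lambda>_. 1) ka a b c - theta_integral (\<lambda>\<theta>. cos \<theta> ^ 2) kx a b c"
proof -
  have "theta_integral (\<lambda>\<theta>. 2 * (a - c) * cos \<theta> ^ 2) kax a b c
      + theta_integral (\<lambda>_. -1 * 1) ka a b c + theta_integral (\<lambda>\<theta>. cos \<theta> ^ 2) kx a b c = 0"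
  proof (rule theta_integral_sum_eq_0[OF _ _ _ kax ka kx])
    show "((\<lambda>\<theta>. sin \<theta> * cos \<theta> * ka a (eta b c \<theta>)) has_real_derivative
        2 * (a - c) * cos \<theta> ^ 2 * kax a (eta b c \<theta>) + -1 * 1 * ka a (eta b c \<theta>)
        + cos \<theta> ^ 2 * kx a (eta b c \<theta>)) (at \<theta>)" for \<theta>
      using has_real_derivative_sin_cos_ka unfolding kx_eta_eq
      by (rule DERIV_cong) (insert sin_cos_squared_add[of \<theta>], algebra)
  qed (use ord in \<open>auto intro!: continuous_intros\<close>)
  then show ?thesis unfolding theta_integral_cmult by simp
qed

end

end

lemma integral_pos_of_continuous_nonneg:
  fixes f :: "real \<Rightarrow> real"
  assumes c: "continuous_on {a..b} f" and nonneg: "\<And>x. x \<in> {a..b} \<Longrightarrow> 0 \<le> f x"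
    and pos: "x \<in> {a<..<b}" "f x > 0"
  shows "integral {a..b} f > 0"
proof -
  have f: "(f has_integral integral {a..b} f) {a..b}"
    using integrable_continuous_real[OF c] by (rule integrable_integral)
  have "integral {a..b} f \<noteq> 0"
  proof
    assume "integral {a..b} f = 0"
    then have "(f has_integral 0) (cbox a b)" using f by simp
    then have "f x = 0"
      by (intro has_integral_0_cbox_imp_0[where f = f and a = a and b = b])
         (use c nonneg pos in \<open>auto simp: box_real\<close>)
    with pos show False by simp
  qed
  moreover have "0 \<le> integral {a..b} f" by (rule has_integral_nonneg[OF f nonneg])
  ultimately show ?thesis by linarith
qed

lemma theta_integral_pos:
  assumes s: "continuous_on {0..pi/2} s" "\<And>\<theta>. \<theta> \<in> {0..pi/2} \<Longrightarrow> 0 \<le> s \<theta>" "s (pi/4) > 0"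
    and k: "continuous_on (kern_domain \<nu>) (case_prod k)" "\<And>a x. (a, x) \<in> kern_domain \<nu> \<Longrightarrow> k a x > 0"
    and ord: "-\<nu> < c" "c \<le> b" "b < a"
  shows "theta_integral s k a b c > 0"
  unfolding theta_integral_def
proof (rule integral_pos_of_continuous_nonneg)
  show "continuous_on {0..pi/2} (\<lambda>\<theta>. s \<theta> * k a (eta b c \<theta>))"
    by (rule continuous_on_theta_integrand[OF s(1) k(1) ord])
  show "pi/4 \<in> {0<..<pi/2}" using pi_gt_zero by auto
  show "0 \<le> s \<theta> * k a (eta b c \<theta>)" if "\<theta> \<in> {0..pi/2}" for \<theta>
    using s(2)[OF that] k(2)[OF eta_in_kern_domain[OF ord], of \<theta>] by simp
  show "s (pi/4) * k a (eta b c (pi/4)) > 0"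
    using s(3) k(2)[OF eta_in_kern_domain[OF ord]] by simp
qed

definition theta_of :: "real \<Rightarrow> real \<Rightarrow> real \<Rightarrow> real" where
  "theta_of b c \<eta> = arcsin (sqrt ((\<eta> - c) / (b - c)))"

context
  fixes b c :: real
  assumes cb: "c < b"
begin

lemma theta_of_mem:
  assumes "\<eta> \<in> {c..b}"
  shows "theta_of b c \<eta> \<in> {0..pi/2}"
proof -
  have "0 \<le> sqrt ((\<eta> - c) / (b - c))" "sqrt ((\<eta> - c) / (b - c)) \<le> 1"
    using assms cb by auto
  then have "arcsin 0 \<le> theta_of b c \<eta>" "theta_of b c \<eta> \<le> arcsin 1"
    unfolding theta_of_def by (intro arcsin_le_arcsin; linarith)+
  then show ?thesis by simp
qed

lemma theta_of_mem_interior: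
  assumes "\<eta> \<in> {c<..<b}"
  shows "theta_of b c \<eta> \<in> {0<..<pi/2}"
proof -
  have "0 < sqrt ((\<eta> - c) / (b - c))" "sqrt ((\<eta> - c) / (b - c)) < 1"
    using assms cb by auto
  then have "arcsin 0 < theta_of b c \<eta>" "theta_of b c \<eta> < arcsin 1"
    unfolding theta_of_def by (intro arcsin_less_arcsin; linarith)+
  then show ?thesis by simp
qed

lemma eta_theta_of:
  assumes "\<eta> \<in> {c..b}"
  shows "eta b c (theta_of b c \<eta>) = \<eta>"
proof -
  have "0 \<le> (\<eta> - c) / (b - c)" "sqrt ((\<eta> - c) / (b - c)) \<le> 1"
    using assms cb by auto
  moreover have "-1 \<le> sqrt ((\<eta> - c) / (b - c))"
    using real_sqrt_ge_zero[OF calculation(1)] by linarith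
  ultimately have "sin (theta_of b c \<eta>) ^ 2 = (\<eta> - c) / (b - c)"
    unfolding theta_of_def by (subst sin_arcsin) auto
  then show ?thesis unfolding eta_eq using cb by simp
qed

lemma continuous_on_theta_of: "continuous_on {c..b} (theta_of b c)"
proof -
  have "-1 \<le> sqrt ((\<eta> - c) / (b - c))" if "\<eta> \<in> {c..b}" for \<eta>
  proof -
    have "0 \<le> (\<eta> - c) / (b - c)" using that cb by simp
    then show ?thesis using real_sqrt_ge_zero[of "(\<eta> - c) / (b - c)"] by linarith
  qed
  then show ?thesis
    unfolding theta_of_def by (intro continuous_intros) (use cb in auto)
qed

lemma has_real_derivative_theta_of:
  assumes \<eta>: "\<eta> \<in> {c<..<b}"
  shows "(theta_of b c has_real_derivative 1 / (2 * sqrt ((\<eta> - c) * (b - \<eta>)))) (at \<eta>)"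
proof -
  define r where "r = (\<eta> - c) / (b - c)"
  have r: "0 < r" "r < 1" using cb \<eta> by (auto simp: r_def)
  then have sqrt_r: "-1 < sqrt r" "sqrt r < 1"
    using real_sqrt_gt_zero[of r] by (linarith, simp)
  have "(theta_of b c has_real_derivative
          inverse (sqrt (1 - (sqrt r)\<^sup>2)) * (inverse (sqrt r) / 2 * (1 / (b - c)))) (at \<eta>)"
    unfolding theta_of_def r_def
    by (rule DERIV_chain2[OF DERIV_arcsin DERIV_chain2[OF DERIV_real_sqrt]],
        use r sqrt_r[unfolded r_def] cb in \<open>auto simp: r_def intro!: derivative_eq_intros\<close>)
  moreover have "inverse (sqrt (1 - (sqrt r)\<^sup>2)) * (inverse (sqrt r) / 2 * (1 / (b - c)))
      = 1 / (2 * sqrt ((\<eta> - c) * (b - \<eta>)))"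
  proof -
    define q where "q = sqrt (b - c)"
    have "1 - (sqrt r)\<^sup>2 = (b - \<eta>) / (b - c)" using r cb by (simp add: r_def field_simps)
    then have s1: "sqrt (1 - (sqrt r)\<^sup>2) = sqrt (b - \<eta>) / q"
      by (simp add: q_def real_sqrt_divide)
    have s2: "sqrt r = sqrt (\<eta> - c) / q" and q: "b - c = q * q"
      using cb by (simp_all add: r_def q_def real_sqrt_divide)
    have pos: "0 < q" "0 < sqrt (b - \<eta>)" "0 < sqrt (\<eta> - c)"
      using cb \<eta> by (auto simp: q_def)
    have "inverse (x / q) * (inverse (y / q) / 2 * (1 / (q * q))) = 1 / (2 * (y * x))"
      if "q > 0" "x > 0" "y > 0" for x y q :: real
      using that by (simp add: field_simps)
    from this[OF pos] show ?thesis
      unfolding s1 unfolding s2 q real_sqrt_mult .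
  qed
  ultimately show ?thesis by simp
qed

end

lemma integral_eq_theta_integral:
  assumes ord: "-\<nu> < c" "c < b" "b < a"
  shows "integral {c..b} (\<lambda>\<eta>. (\<eta> + \<nu>) / sqrt ((\<eta> + \<nu>) * (a - \<eta>) * (b - \<eta>) * (\<eta> - c)))
           = theta_integral (\<lambda>_. 1) (kern \<nu>) a b c"
proof -
  define g where "g = (\<lambda>\<theta>. 1 * kern \<nu> a (eta b c \<theta>))"
  have g: "continuous_on {0..pi/2} g"
    unfolding g_def using ord by (intro continuous_on_theta_integrand[OF _ continuous_on_kernels(1)]) auto
  define F where "F \<eta> = integral {0..theta_of b c \<eta>} g" for \<eta>
  have "continuous_on {c..b} F"
    unfolding F_def
    by (rule continuous_on_compose2[OF indefinite_integral_continuous_1[OF integrable_continuous_real[OF g]]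
          continuous_on_theta_of]) (use ord theta_of_mem in auto)
  moreover have "(F has_real_derivative (\<eta> + \<nu>) / sqrt ((\<eta> + \<nu>) * (a - \<eta>) * (b - \<eta>) * (\<eta> - c))) (at \<eta>)"
    if \<eta>: "\<eta> \<in> {c<..<b}" for \<eta>
  proof -
    have \<theta>: "theta_of b c \<eta> \<in> interior {0..pi/2}" using theta_of_mem_interior[OF _ \<eta>] ord by simp
    have "((\<lambda>x. integral {0..x} g) has_real_derivative g (theta_of b c \<eta>)) (at (theta_of b c \<eta>))"
      using integral_has_real_derivative[OF g, of "theta_of b c \<eta>"] interior_subset[of "{0..pi/2}"]
        at_within_interior[OF \<theta>] \<theta> by auto
    then have "(F has_real_derivative g (theta_of b c \<eta>) * (1 / (2 * sqrt ((\<eta> - c) * (b - \<eta>))))) (at \<eta>)"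
      unfolding F_def using ord \<eta> by (intro DERIV_chain2[OF _ has_real_derivative_theta_of]) auto
    moreover have "g (theta_of b c \<eta>) * (1 / (2 * sqrt ((\<eta> - c) * (b - \<eta>))))
        = (\<eta> + \<nu>) / sqrt ((\<eta> + \<nu>) * (a - \<eta>) * (b - \<eta>) * (\<eta> - c))"
    proof -
      define P X Y Z where "P = sqrt (\<eta> + \<nu>)" "X = sqrt (a - \<eta>)" "Y = sqrt (b - \<eta>)" "Z = sqrt (\<eta> - c)"
      have "0 < P" "0 < X" "0 < Y" "0 < Z" and P: "\<eta> + \<nu> = P * P"
        using ord \<eta> by (auto simp: P_X_Y_Z_def)
      moreover have "g (theta_of b c \<eta>) = 2 * P / X"
        unfolding g_def kern_def P_X_Y_Z_def using eta_theta_of[of c b \<eta>] ord \<eta> by auto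
      moreover have "sqrt ((\<eta> + \<nu>) * (a - \<eta>) * (b - \<eta>) * (\<eta> - c)) = P * X * Y * Z"
        "sqrt ((\<eta> - c) * (b - \<eta>)) = Z * Y"
        by (simp_all add: real_sqrt_mult P_X_Y_Z_def)
      ultimately show ?thesis by (simp add: field_simps)
    qed
    ultimately show ?thesis by simp
  qed
  ultimately have "((\<lambda>\<eta>. (\<eta> + \<nu>) / sqrt ((\<eta> + \<nu>) * (a - \<eta>) * (b - \<eta>) * (\<eta> - c))) has_integral F b - F c) {c..b}"
    using ord by (intro fundamental_theorem_of_calculus_interior)
                 (auto simp: has_real_derivative_iff_has_vector_derivative)
  moreover have "F b = theta_integral (\<lambda>_. 1) (kern \<nu>) a b c" "F c = 0"
    using ord by (simp_all add: F_def theta_of_def theta_integral_def g_def)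
  ultimately show ?thesis by (simp add: integral_unique)
qed

lemma kern_integral_derivatives:
  assumes ord: "-\<nu> < c" "c < b" "b < a"
  shows "((\<lambda>a. theta_integral (\<lambda>_. 1) (kern \<nu>) a b c) has_real_derivative
            theta_integral (\<lambda>_. 1) (kern_a \<nu>) a b c) (at a)"
    and "((\<lambda>b. theta_integral (\<lambda>_. 1) (kern \<nu>) a b c) has_real_derivative
            theta_integral (\<lambda>\<theta>. sin \<theta> ^ 2) (kern_x \<nu>) a b c) (at b)"
    and "((\<lambda>c. theta_integral (\<lambda>_. 1) (kern \<nu>) a b c) has_real_derivative
            theta_integral (\<lambda>\<theta>. cos \<theta> ^ 2) (kern_x \<nu>) a b c) (at c)"
    and "((\<lambda>b. theta_integral (\<lambda>_. 1) (kern_a \<nu>) a b c) has_real_derivative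
            theta_integral (\<lambda>\<theta>. sin \<theta> ^ 2) (kern_ax \<nu>) a b c) (at b)"
    and "((\<lambda>c. theta_integral (\<lambda>_. 1) (kern_a \<nu>) a b c) has_real_derivative
            theta_integral (\<lambda>\<theta>. cos \<theta> ^ 2) (kern_ax \<nu>) a b c) (at c)"
    and "((\<lambda>a. theta_integral (\<lambda>\<theta>. sin \<theta> ^ 2) (kern_x \<nu>) a b c) has_real_derivative
            theta_integral (\<lambda>\<theta>. sin \<theta> ^ 2) (kern_ax \<nu>) a b c) (at a)"
    and "((\<lambda>c. theta_integral (\<lambda>\<theta>. sin \<theta> ^ 2) (kern_x \<nu>) a b c) has_real_derivative
            theta_integral (\<lambda>\<theta>. sin \<theta> ^ 2 * cos \<theta> ^ 2) (kern_xx \<nu>) a b c) (at c)"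
    and "((\<lambda>a. theta_integral (\<lambda>\<theta>. cos \<theta> ^ 2) (kern_x \<nu>) a b c) has_real_derivative
            theta_integral (\<lambda>\<theta>. cos \<theta> ^ 2) (kern_ax \<nu>) a b c) (at a)"
    and "((\<lambda>b. theta_integral (\<lambda>\<theta>. cos \<theta> ^ 2) (kern_x \<nu>) a b c) has_real_derivative
            theta_integral (\<lambda>\<theta>. sin \<theta> ^ 2 * cos \<theta> ^ 2) (kern_xx \<nu>) a b c) (at b)"
proof -
  note one = continuous_on_const[of "{0..pi/2}" 1]
  have sin2: "continuous_on {0..pi/2} (\<lambda>\<theta>. sin \<theta> ^ 2)" and cos2: "continuous_on {0..pi/2} (\<lambda>\<theta>. cos \<theta> ^ 2)"
    by (auto intro!: continuous_intros)
  note K = continuous_on_kernels[of \<nu>] and D = kern_derivatives[of _ _ \<nu>]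
  show "((\<lambda>a. theta_integral (\<lambda>_. 1) (kern \<nu>) a b c) has_real_derivative
            theta_integral (\<lambda>_. 1) (kern_a \<nu>) a b c) (at a)"
    by (rule has_real_derivative_theta_integral_a[OF one K(1,2) D(1) ord])
  show "((\<lambda>b. theta_integral (\<lambda>_. 1) (kern \<nu>) a b c) has_real_derivative
            theta_integral (\<lambda>\<theta>. sin \<theta> ^ 2) (kern_x \<nu>) a b c) (at b)"
    using has_real_derivative_theta_integral_b[OF one K(1,3) D(2) ord] by simp
  show "((\<lambda>c. theta_integral (\<lambda>_. 1) (kern \<nu>) a b c) has_real_derivative
            theta_integral (\<lambda>\<theta>. cos \<theta> ^ 2) (kern_x \<nu>) a b c) (at c)"
    using has_real_derivative_theta_integral_c[OF one K(1,3) D(2) ord] by simp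
  show "((\<lambda>b. theta_integral (\<lambda>_. 1) (kern_a \<nu>) a b c) has_real_derivative
            theta_integral (\<lambda>\<theta>. sin \<theta> ^ 2) (kern_ax \<nu>) a b c) (at b)"
    using has_real_derivative_theta_integral_b[OF one K(2,4) D(3) ord] by simp
  show "((\<lambda>c. theta_integral (\<lambda>_. 1) (kern_a \<nu>) a b c) has_real_derivative
            theta_integral (\<lambda>\<theta>. cos \<theta> ^ 2) (kern_ax \<nu>) a b c) (at c)"
    using has_real_derivative_theta_integral_c[OF one K(2,4) D(3) ord] by simp
  show "((\<lambda>a. theta_integral (\<lambda>\<theta>. sin \<theta> ^ 2) (kern_x \<nu>) a b c) has_real_derivative
            theta_integral (\<lambda>\<theta>. sin \<theta> ^ 2) (kern_ax \<nu>) a b c) (at a)"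
    by (rule has_real_derivative_theta_integral_a[OF sin2 K(3,4) D(4) ord])
  show "((\<lambda>c. theta_integral (\<lambda>\<theta>. sin \<theta> ^ 2) (kern_x \<nu>) a b c) has_real_derivative
            theta_integral (\<lambda>\<theta>. sin \<theta> ^ 2 * cos \<theta> ^ 2) (kern_xx \<nu>) a b c) (at c)"
    by (rule has_real_derivative_theta_integral_c[OF sin2 K(3,5) D(5) ord])
  show "((\<lambda>a. theta_integral (\<lambda>\<theta>. cos \<theta> ^ 2) (kern_x \<nu>) a b c) has_real_derivative
            theta_integral (\<lambda>\<theta>. cos \<theta> ^ 2) (kern_ax \<nu>) a b c) (at a)"
    by (rule has_real_derivative_theta_integral_a[OF cos2 K(3,4) D(4) ord])
  show "((\<lambda>b. theta_integral (\<lambda>\<theta>. cos \<theta> ^ 2) (kern_x \<nu>) a b c) has_real_derivative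
            theta_integral (\<lambda>\<theta>. sin \<theta> ^ 2 * cos \<theta> ^ 2) (kern_xx \<nu>) a b c) (at b)"
    using has_real_derivative_theta_integral_b[OF cos2 K(3,5) D(5) ord] by (simp add: mult.commute)
qed

definition ordered_region :: "real \<Rightarrow> (real^3) set" where
  "ordered_region \<nu> = {u. -\<nu> < u$3 \<and> u$3 < u$2 \<and> u$2 < u$1}"

lemma open_ordered_region: "open (ordered_region \<nu>)"
proof -
  have "ordered_region \<nu> = {u. -\<nu> < u$3} \<inter> {u. u$3 < u$2} \<inter> {u. u$2 < u$1}"
    by (auto simp: ordered_region_def)
  then show ?thesis
    by (auto intro!: open_Int open_Collect_less continuous_intros)
qed

lemma open_axis_preimage:
  fixes u :: "real^'n"
  assumes "open S"
  shows "open {t :: real. u + t *\<^sub>R axis j 1 \<in> S}"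
proof -
  have "open ((\<lambda>t. u + t *\<^sub>R axis j 1) -` S)"
    by (rule continuous_open_vimage[OF assms]) (intro continuous_intros)
  then show ?thesis by (simp add: vimage_def)
qed

lemma has_real_derivative_along_axis:
  fixes H :: "real \<Rightarrow> real \<Rightarrow> real \<Rightarrow> real" and u :: "real^3"
  assumes "j = 1 \<Longrightarrow> ((\<lambda>x. H x (u$2) (u$3)) has_real_derivative D) (at (u$1))"
    and "j = 2 \<Longrightarrow> ((\<lambda>x. H (u$1) x (u$3)) has_real_derivative D) (at (u$2))"
    and "j = 3 \<Longrightarrow> ((\<lambda>x. H (u$1) (u$2) x) has_real_derivative D) (at (u$3))"
  shows "((\<lambda>t. H ((u + t *\<^sub>R axis j 1)$1) ((u + t *\<^sub>R axis j 1)$2) ((u + t *\<^sub>R axis j 1)$3))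
           has_real_derivative D) (at 0)"
proof -
  have comp: "(u + t *\<^sub>R axis j 1) $ k = u $ k + (if k = j then t else 0)" for t k
    by (simp add: axis_def)
  have shift: "((\<lambda>t. f (t + x)) has_real_derivative D) (at 0)" if "(f has_real_derivative D) (at x)" for f x
    using that DERIV_shift[of f D 0 x] by simp
  consider "j = 1" | "j = 2" | "j = 3" using exhaust_3 by blast
  then show ?thesis
    by cases (use shift[OF assms(1)] shift[OF assms(2)] shift[OF assms(3)]
        in \<open>simp_all only: comp, simp_all add: axis_def add.commute\<close>)
qed

definition dIint :: "real \<Rightarrow> 3 \<Rightarrow> real^3 \<Rightarrow> real" where
  "dIint \<nu> i u =
    (if i = 1 then theta_integral (\<lambda>_. 1) (kern_a \<nu>) (u$1) (u$2) (u$3)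
     else if i = 2 then theta_integral (\<lambda>\<theta>. sin \<theta> ^ 2) (kern_x \<nu>) (u$1) (u$2) (u$3)
     else theta_integral (\<lambda>\<theta>. cos \<theta> ^ 2) (kern_x \<nu>) (u$1) (u$2) (u$3))"

definition ddIint :: "real \<Rightarrow> 3 \<Rightarrow> 3 \<Rightarrow> real^3 \<Rightarrow> real" where
  "ddIint \<nu> i j u =
    (if i = 1 \<and> j = 2 \<or> i = 2 \<and> j = 1 then theta_integral (\<lambda>\<theta>. sin \<theta> ^ 2) (kern_ax \<nu>) (u$1) (u$2) (u$3)
     else if i = 1 \<and> j = 3 \<or> i = 3 \<and> j = 1 then theta_integral (\<lambda>\<theta>. cos \<theta> ^ 2) (kern_ax \<nu>) (u$1) (u$2) (u$3)
     else theta_integral (\<lambda>\<theta>. sin \<theta> ^ 2 * cos \<theta> ^ 2) (kern_xx \<nu>) (u$1) (u$2) (u$3))"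

lemma ordered_regionD: "u \<in> ordered_region \<nu> \<Longrightarrow> -\<nu> < u$3 \<and> u$3 < u$2 \<and> u$2 < u$1"
  by (simp add: ordered_region_def)

lemma Iint_eq_theta_integral:
  "u \<in> ordered_region \<nu> \<Longrightarrow> Iint \<nu> u = theta_integral (\<lambda>_. 1) (kern \<nu>) (u$1) (u$2) (u$3)"
  unfolding Iint_def by (rule integral_eq_theta_integral) (auto dest: ordered_regionD)

lemma has_real_derivative_Iint_axis:
  assumes u: "u \<in> ordered_region \<nu>"
  shows "((\<lambda>t. Iint \<nu> (u + t *\<^sub>R axis j 1)) has_real_derivative dIint \<nu> j u) (at 0)"
proof -
  note ord = ordered_regionD[OF u]
  have "((\<lambda>t. theta_integral (\<lambda>_. 1) (kern \<nu>) ((u + t *\<^sub>R axis j 1)$1) ((u + t *\<^sub>R axis j 1)$2)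
          ((u + t *\<^sub>R axis j 1)$3)) has_real_derivative dIint \<nu> j u) (at 0)"
    using ord by (intro has_real_derivative_along_axis) (auto simp: dIint_def intro: kern_integral_derivatives)
  then show ?thesis
    by (rule has_field_derivative_transform_within_open[OF _ open_axis_preimage[OF open_ordered_region, of u j]])
       (use u in \<open>auto simp: Iint_eq_theta_integral\<close>)
qed

lemma pd_Iint: "u \<in> ordered_region \<nu> \<Longrightarrow> pd i (Iint \<nu>) u = dIint \<nu> i u"
  unfolding pd_def by (rule DERIV_imp_deriv[OF has_real_derivative_Iint_axis])

lemma has_real_derivative_dIint_axis:
  assumes u: "u \<in> ordered_region \<nu>" and ij: "i \<noteq> j"
  shows "((\<lambda>t. dIint \<nu> i (u + t *\<^sub>R axis j 1)) has_real_derivative ddIint \<nu> i j u) (at 0)"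
  unfolding dIint_def using ij ordered_regionD[OF u] exhaust_3[of i]
  by (intro has_real_derivative_along_axis) (auto simp: ddIint_def intro: kern_integral_derivatives)

lemma dIint_epd:
  assumes u: "u \<in> ordered_region \<nu>" and ij: "i \<noteq> j"
  shows "2 * (u$i - u$j) * ddIint \<nu> i j u = dIint \<nu> i u - dIint \<nu> j u"
proof -
  note ord = ordered_regionD[OF u]
  note K = continuous_on_kernels[of \<nu>] and D = kern_derivatives[of _ _ \<nu>]
  have "2 * (u$2 - u$3) * ddIint \<nu> 2 3 u = dIint \<nu> 2 u - dIint \<nu> 3 u"
    using theta_integral_epd_bc[OF _ _ _ K(3,5) D(5)] ord by (simp add: ddIint_def dIint_def)
  moreover have "2 * (u$1 - u$2) * ddIint \<nu> 1 2 u = dIint \<nu> 1 u - dIint \<nu> 2 u"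
    "2 * (u$1 - u$3) * ddIint \<nu> 1 3 u = dIint \<nu> 1 u - dIint \<nu> 3 u"
    using theta_integral_epd_ab[OF _ _ _ K(2,3,4) D(3) kern_pde]
      theta_integral_epd_ac[OF _ _ _ K(2,3,4) D(3) kern_pde] ord
    by (simp_all add: ddIint_def dIint_def)
  moreover have "ddIint \<nu> i j u = ddIint \<nu> j i u"
    by (simp add: ddIint_def conj_disj_distribR disj_commute)
  ultimately show ?thesis
    using ij exhaust_3[of i] exhaust_3[of j] by (auto simp: algebra_simps)
qed

lemma theta_integral_neg:
  assumes "continuous_on {0..pi/2} s" "\<And>\<theta>. \<theta> \<in> {0..pi/2} \<Longrightarrow> 0 \<le> s \<theta>" "s (pi/4) > 0"
    and k: "continuous_on (kern_domain \<nu>) (case_prod k)" "\<And>a x. (a, x) \<in> kern_domain \<nu> \<Longrightarrow> k a x < 0"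
    and "-\<nu> < c" "c \<le> b" "b < a"
  shows "theta_integral s k a b c < 0"
proof -
  have "continuous_on (kern_domain \<nu>) (\<lambda>(a, x). - k a x)"
    using continuous_on_minus[OF k(1)] by (simp add: split_beta')
  then have "0 < theta_integral s (\<lambda>a x. - k a x) a b c"
    using assms by (intro theta_integral_pos) auto
  then show ?thesis by (simp add: theta_integral_def)
qed

lemma Iint_pos: "u \<in> ordered_region \<nu> \<Longrightarrow> Iint \<nu> u > 0"
  unfolding Iint_eq_theta_integral
  by (rule theta_integral_pos[OF _ _ _ continuous_on_kernels(1) kern_signs(1)])
     (auto dest: ordered_regionD)

lemma dIint_nonzero:
  assumes u: "u \<in> ordered_region \<nu>"
  shows "dIint \<nu> i u \<noteq> 0"
proof -
  note ord = ordered_regionD[OF u]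
  have "theta_integral (\<lambda>_. 1) (kern_a \<nu>) (u$1) (u$2) (u$3) < 0"
    by (rule theta_integral_neg[OF _ _ _ continuous_on_kernels(2) kern_signs(2)]) (use ord in auto)
  moreover have "theta_integral (\<lambda>\<theta>. sin \<theta> ^ 2) (kern_x \<nu>) (u$1) (u$2) (u$3) > 0"
    "theta_integral (\<lambda>\<theta>. cos \<theta> ^ 2) (kern_x \<nu>) (u$1) (u$2) (u$3) > 0"
    by (rule theta_integral_pos[OF _ _ _ continuous_on_kernels(3) kern_signs(3)];
        use ord in \<open>auto intro!: continuous_intros simp: sin_45 cos_45\<close>)+
  ultimately show ?thesis by (auto simp: dIint_def)
qed

lemma smooth3_on_axis_derivatives:
  assumes "smooth3_on S g" "x \<in> S"
  shows "((\<lambda>t. g (x + t *\<^sub>R axis j 1)) has_real_derivative pd j g x) (at 0)"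
    and "((\<lambda>t. pd i g (x + t *\<^sub>R axis j 1)) has_real_derivative pd j (pd i g) x) (at 0)"
proof -
  have "((\<lambda>t. iter_pd is g (x + t *\<^sub>R axis j 1)) has_real_derivative iter_pd (j # is) g x) (at 0)" for "is"
    using assms unfolding smooth3_on_def by blast
  from this[of "[]"] this[of "[i]"]
  show "((\<lambda>t. g (x + t *\<^sub>R axis j 1)) has_real_derivative pd j g x) (at 0)"
    "((\<lambda>t. pd i g (x + t *\<^sub>R axis j 1)) has_real_derivative pd j (pd i g) x) (at 0)"
    by (simp_all add: iter_pd_def)
qed

lemma wfun_eq:
  assumes "x \<in> ordered_region \<nu>"
  shows "wfun \<nu> q i x = - (Iint \<nu> x / dIint \<nu> i x) * pd i q x + q x"
proof -
  have "lam_ext \<nu> i x = lam \<nu> i x"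
    using ordered_regionD[OF assms] by (simp add: lam_ext_def)
  then show ?thesis unfolding wfun_def lam_def using pd_Iint[OF assms] by simp
qed

lemma Bcoef_eq:
  assumes "x \<in> ordered_region \<nu>"
  shows "Bcoef \<nu> i j x = 1/2 * (- (Iint \<nu> x / dIint \<nu> i x) - 2 * (x$i - x$j))
                          / (- (Iint \<nu> x / dIint \<nu> j x) * (x$i - x$j))"
  unfolding Bcoef_def lam_def using pd_Iint[OF assms] by simp

lemma has_real_derivative_riemann_invariant:
  fixes I Ii q qi :: "real \<Rightarrow> real"
  assumes I: "(I has_real_derivative Ij) (at 0)" and Ii: "(Ii has_real_derivative Iij) (at 0)"
    and q: "(q has_real_derivative qj) (at 0)" and qi: "(qi has_real_derivative qij) (at 0)"
    and epd: "2 * d * Iij = Ii 0 - Ij" "2 * d * qij = qi 0 - qj"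
    and nz: "d \<noteq> 0" "I 0 \<noteq> 0" "Ii 0 \<noteq> 0" "Ij \<noteq> 0"
  shows "((\<lambda>t. - (I t / Ii t) * qi t + q t) has_real_derivative
           1/2 * (- (I 0 / Ii 0) - 2 * d) / (- (I 0 / Ij) * d)
             * ((- (I 0 / Ii 0) * qi 0 + q 0) - (- (I 0 / Ij) * qj + q 0))) (at 0)"
proof -
  have e: "Iij = (Ii 0 - Ij) / (2 * d)" "qij = (qi 0 - qj) / (2 * d)"
    using epd nz by (auto simp: field_simps)
  show ?thesis
    by (rule DERIV_cong[OF DERIV_add[OF DERIV_mult[OF DERIV_minus[OF DERIV_divide[OF I Ii nz(3)]] qi] q]])
       (unfold e, use nz in \<open>simp add: field_simps\<close>)
qed

lemma has_real_derivative_wfun_axis: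
  assumes u: "u \<in> ordered_region \<nu>" and ij: "i \<noteq> j"
    and q: "smooth3_on S q" "u \<in> S"
    and pde: "2 * (u$i - u$j) * pd j (pd i q) u = pd i q u - pd j q u"
  shows "((\<lambda>t. wfun \<nu> q i (u + t *\<^sub>R axis j 1)) has_real_derivative
           Bcoef \<nu> i j u * (wfun \<nu> q i u - wfun \<nu> q j u)) (at 0)"
proof -
  have "u$i \<noteq> u$j"
    using ij ordered_regionD[OF u] exhaust_3[of i] exhaust_3[of j] by auto
  then have "((\<lambda>t. - (Iint \<nu> (u + t *\<^sub>R axis j 1) / dIint \<nu> i (u + t *\<^sub>R axis j 1))
                * pd i q (u + t *\<^sub>R axis j 1) + q (u + t *\<^sub>R axis j 1)) has_real_derivative
      Bcoef \<nu> i j u * (wfun \<nu> q i u - wfun \<nu> q j u)) (at 0)"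
    using has_real_derivative_riemann_invariant[OF has_real_derivative_Iint_axis[OF u]
        has_real_derivative_dIint_axis[OF u ij] smooth3_on_axis_derivatives[OF q],
        unfolded scale_zero_left add_0_right, OF dIint_epd[OF u ij] pde]
      Iint_pos[OF u] dIint_nonzero[OF u]
    by (simp add: Bcoef_eq[OF u] wfun_eq[OF u])
  then show ?thesis
    by (rule has_field_derivative_transform_within_open[OF _ open_axis_preimage[OF open_ordered_region, of u j]])
       (use u in \<open>auto simp: wfun_eq\<close>)
qed

lemma has_real_derivative_diagonal:
  fixes f fy :: "real \<Rightarrow> real \<Rightarrow> real"
  assumes fx: "((\<lambda>x. f x 0) has_real_derivative A) (at 0)"
    and fy: "\<And>x y. x \<in> X \<Longrightarrow> y \<in> X \<Longrightarrow> ((\<lambda>y. f x y) has_real_derivative fy x y) (at y)"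
    and cont: "continuous_on (X \<times> X) (\<lambda>p. fy (fst p) (snd p))" and X: "open X" "convex X" "0 \<in> X"
  shows "((\<lambda>t. f t t) has_real_derivative A + fy 0 0) (at 0)"
proof -
  have fx': "((\<lambda>x. f x 0) has_derivative (\<lambda>h. A * h)) (at 0 within X)"
    using fx unfolding has_field_derivative_def by (auto intro: has_derivative_at_withinI)
  have fy': "((\<lambda>y. f x y) has_derivative blinfun_apply (blinfun_mult_right (fy x y))) (at y within X)"
    if "x \<in> X" "y \<in> X" for x y
    using fy[OF that] unfolding has_field_derivative_def by (auto intro: has_derivative_at_withinI)
  have "continuous_on (X \<times> X) (\<lambda>p. blinfun_mult_right (fy (fst p) (snd p)))"
    using cont by (intro continuous_intros)
  then have fy_cont: "continuous (at (0, 0) within X \<times> X) (\<lambda>(x, y). blinfun_mult_right (fy x y))"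
    using X by (simp add: continuous_on_eq_continuous_within split_beta')
  have "((\<lambda>(x, y). f x y) has_derivative
      (\<lambda>(tx, ty). A * tx + blinfun_apply (blinfun_mult_right (fy 0 0)) ty)) (at (0, 0) within X \<times> X)"
    by (rule has_derivative_partialsI[OF fx' fy' fy_cont X(3,2)])
  then have "((\<lambda>(x, y). f x y) has_derivative (\<lambda>(tx, ty). A * tx + fy 0 0 * ty)) (at (0, 0))"
    using X(1,3) by (simp add: at_within_open[of "(0, 0)" "X \<times> X"] open_Times)
  moreover have "((\<lambda>t::real. (t, t)) has_derivative (\<lambda>h. (h, h))) (at 0)"
    by (intro derivative_eq_intros) auto
  ultimately have "((\<lambda>t. f t t) has_derivative (\<lambda>h. (A + fy 0 0) * h)) (at 0)"
    using has_derivative_compose by (fastforce simp: algebra_simps)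
  then show ?thesis unfolding has_field_derivative_def by simp
qed

lemma smooth3_on_pd: "smooth3_on S g \<Longrightarrow> smooth3_on S (pd i g)"
proof -
  assume "smooth3_on S g"
  moreover have "iter_pd is (pd i g) = iter_pd (is @ [i]) g" for "is"
    by (simp add: iter_pd_def)
  ultimately show ?thesis
    unfolding smooth3_on_def by (metis append_Cons)
qed

lemma continuous_on_pd: "smooth3_on S g \<Longrightarrow> continuous_on S (pd i g)"
  unfolding smooth3_on_def iter_pd_def by (metis foldr.simps(1,2) id_apply o_apply)

lemma has_real_derivative_smooth3_diagonal:
  fixes g :: "real^3 \<Rightarrow> real"
  assumes g: "smooth3_on S g" and S: "open S" "p \<in> S"
  shows "((\<lambda>t. g (p + t *\<^sub>R axis k 1 + t *\<^sub>R axis l 1)) has_real_derivative pd k g p + pd l g p) (at 0)"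
proof -
  obtain e where e: "e > 0" "ball p e \<subseteq> S" using S open_contains_ball by blast
  define X where "X = ball (0::real) (e / 2)"
  define z where "z x y = p + x *\<^sub>R axis k 1 + y *\<^sub>R axis l 1" for x y
  have z: "z x y \<in> S" if "x \<in> X" "y \<in> X" for x y
  proof -
    have "norm (x *\<^sub>R axis k (1::real) + y *\<^sub>R axis l 1) \<le> \<bar>x\<bar> + \<bar>y\<bar>"
      using norm_triangle_ineq[of "x *\<^sub>R axis k (1::real)" "y *\<^sub>R axis l 1"] by simp
    also have "\<dots> < e" using that by (simp add: X_def)
    finally have "z x y \<in> ball p e"
      by (simp add: z_def dist_norm add.assoc norm_minus_commute add.commute)
    then show ?thesis using e(2) by blast
  qed
  have "((\<lambda>t. g (z t t)) has_real_derivative pd k g p + pd l g (z 0 0)) (at 0)"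
  proof (rule has_real_derivative_diagonal[where f = "\<lambda>x y. g (z x y)" and fy = "\<lambda>x y. pd l g (z x y)"])
    show "((\<lambda>x. g (z x 0)) has_real_derivative pd k g p) (at 0)"
      using smooth3_on_axis_derivatives(1)[OF g S(2)] by (simp add: z_def)
    show "((\<lambda>y. g (z x y)) has_real_derivative pd l g (z x y)) (at y)" if "x \<in> X" "y \<in> X" for x y
      using smooth3_on_axis_derivatives(1)[OF g z[OF that], of l] DERIV_shift[of "\<lambda>y. g (z x y)" _ 0 y]
      by (simp add: z_def algebra_simps)
    show "continuous_on (X \<times> X) (\<lambda>q. pd l g (z (fst q) (snd q)))"
      by (rule continuous_on_compose2[OF continuous_on_pd[OF g]])
         (auto simp: z_def intro!: continuous_intros intro: z[unfolded z_def])
  qed (auto simp: X_def e)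
  then show ?thesis by (simp add: z_def)
qed

lemma has_real_derivative_diagonal_invariant:
  fixes q :: "real^3 \<Rightarrow> real"
  assumes q: "smooth3_on S q" "open S" "p \<in> S"
    and pde: "\<And>i j. 2 * (p$i - p$j) * pd j (pd i q) p = pd i q p - pd j q p"
    and kl: "p$k = p$l"
  shows "((\<lambda>t. 2 * (p$m - p$k - t) * pd m q (p + t *\<^sub>R axis k 1 + t *\<^sub>R axis l 1)
                 + q (p + t *\<^sub>R axis k 1 + t *\<^sub>R axis l 1)) has_real_derivative 0) (at 0)"
proof -
  have "((\<lambda>t. 2 * (p$m - p$k - t)) has_real_derivative -2) (at 0)"
    by (auto intro!: derivative_eq_intros)
  from DERIV_add[OF DERIV_mult[OF this
        has_real_derivative_smooth3_diagonal[OF smooth3_on_pd[OF q(1), of m] q(2,3), where k = k and l = l]]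
        has_real_derivative_smooth3_diagonal[OF q, where k = k and l = l]]
  show ?thesis
    by (rule DERIV_cong) (use pde[of m k] pde[of m l] kl in \<open>simp add: algebra_simps\<close>)
qed

lemma eq_of_shifted_derivative_zero:
  fixes h :: "real \<Rightarrow> real"
  assumes J: "is_interval J" and h: "\<And>s. s \<in> J \<Longrightarrow> ((\<lambda>t. h (s + t)) has_real_derivative 0) (at 0)"
    and "x \<in> J" "y \<in> J"
  shows "h x = h y"
proof -
  have "\<exists>c. \<forall>s\<in>J. h s = c"
  proof (rule has_field_derivative_zero_constant)
    show "convex J" using J by (simp add: is_interval_convex_1)
    show "(h has_real_derivative 0) (at s within J)" if "s \<in> J" for s
      using h[OF that] DERIV_shift[of h 0 0 s] by (simp add: add.commute has_field_derivative_at_within)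
  qed
  with assms show ?thesis by auto
qed

lemma forall_3: "(\<forall>i::3. P i) \<longleftrightarrow> P 1 \<and> P 2 \<and> P 3"
  by (metis exhaust_3)

lemma open_cube: "open J \<Longrightarrow> open (cube J)"
proof -
  assume J: "open J"
  have "open ((\<lambda>u :: real^3. u $ k) -` J)" for k
    by (rule continuous_open_vimage[OF J]) (intro continuous_intros)
  moreover have "cube J = (\<lambda>u. u$1) -` J \<inter> (\<lambda>u. u$2) -` J \<inter> (\<lambda>u. u$3) -` J"
    unfolding cube_def forall_3 by auto
  ultimately show ?thesis by (simp only: open_Int)
qed

lemma vector_mem_cube: "vector [a, b, c] \<in> cube J \<longleftrightarrow> a \<in> J \<and> b \<in> J \<and> c \<in> J"
  unfolding cube_def mem_Collect_eq forall_3 by simp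

lemma vector_shift_12:
  "vector [s + t, s + t, y] = (vector [s, s, y] :: real^3) + t *\<^sub>R axis 1 1 + t *\<^sub>R axis 2 1"
  unfolding vec_eq_iff forall_3 by (simp add: axis_def)

lemma vector_shift_23:
  "vector [x, s + t, s + t] = (vector [x, s, s] :: real^3) + t *\<^sub>R axis 2 1 + t *\<^sub>R axis 3 1"
  unfolding vec_eq_iff forall_3 by (simp add: axis_def)

context
  fixes \<nu> :: real and J :: "real set" and f :: "real \<Rightarrow> real" and q :: "real^3 \<Rightarrow> real"
  assumes J: "open J" "is_interval J"
    and q_smooth: "smooth3_on (cube J) q"
    and pde: "\<And>u i j. u \<in> cube J \<Longrightarrow> 2 * (u$i - u$j) * pd j (pd i q) u = pd i q u - pd j q u"
    and diag: "\<And>x. x \<in> J \<Longrightarrow> q (vector [x, x, x]) = f x"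
begin

lemma wfun_on_face_12:
  assumes "x \<in> J" "y \<in> J" "y < x"
  shows "wfun \<nu> q 1 (vector [x, x, y]) = wfun \<nu> q 2 (vector [x, x, y])"
    and "wfun \<nu> q 3 (vector [x, x, y]) = f y"
proof -
  show "wfun \<nu> q 1 (vector [x, x, y]) = wfun \<nu> q 2 (vector [x, x, y])"
    unfolding wfun_def lam_ext_def gam_def using assms by simp
  define h where "h s = 2 * (y - s) * pd 3 q (vector [s, s, y]) + q (vector [s, s, y])" for s
  have "h x = h y"
  proof (rule eq_of_shifted_derivative_zero[OF J(2) _ assms(1,2)])
    fix s assume "s \<in> J"
    then have p: "vector [s, s, y] \<in> cube J" using assms by (simp add: vector_mem_cube)
    show "((\<lambda>t. h (s + t)) has_real_derivative 0) (at 0)"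
      using has_real_derivative_diagonal_invariant[OF q_smooth open_cube[OF J(1)] p pde[OF p], of 1 2 3]
      unfolding h_def vector_shift_12 by (simp add: algebra_simps)
  qed
  moreover have "h y = f y" unfolding h_def using diag assms by simp
  moreover have "h x = wfun \<nu> q 3 (vector [x, x, y])"
    unfolding h_def wfun_def lam_ext_def gam_def using assms by (simp add: algebra_simps)
  ultimately show "wfun \<nu> q 3 (vector [x, x, y]) = f y" by simp
qed

lemma wfun_on_face_23:
  assumes "x \<in> J" "y \<in> J" "y < x"
  shows "wfun \<nu> q 1 (vector [x, y, y]) = f x"
    and "wfun \<nu> q 2 (vector [x, y, y]) = wfun \<nu> q 3 (vector [x, y, y])"
proof -
  have v: "vector [x, y, y] \<in> cube J" using assms by (simp add: vector_mem_cube)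
  show "wfun \<nu> q 2 (vector [x, y, y]) = wfun \<nu> q 3 (vector [x, y, y])"
    using pde[OF v, of 2 3] assms unfolding wfun_def lam_ext_def gam_def by simp
  define h where "h s = 2 * (x - s) * pd 1 q (vector [x, s, s]) + q (vector [x, s, s])" for s
  have "h x = h y"
  proof (rule eq_of_shifted_derivative_zero[OF J(2) _ assms(1,2)])
    fix s assume "s \<in> J"
    then have p: "vector [x, s, s] \<in> cube J" using assms by (simp add: vector_mem_cube)
    show "((\<lambda>t. h (s + t)) has_real_derivative 0) (at 0)"
      using has_real_derivative_diagonal_invariant[OF q_smooth open_cube[OF J(1)] p pde[OF p], of 2 3 1]
      unfolding h_def vector_shift_23 by (simp add: algebra_simps)
  qed
  moreover have "h x = f x" unfolding h_def using diag assms by simp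
  moreover have "h y = wfun \<nu> q 1 (vector [x, y, y])"
    unfolding h_def wfun_def lam_ext_def gam_def using assms by (simp add: algebra_simps)
  ultimately show "wfun \<nu> q 1 (vector [x, y, y]) = f x" by simp
qed

end

theorem theorem5p1:
  fixes \<nu> :: real and J :: "real set" and f :: "real \<Rightarrow> real" and q :: "real^3 \<Rightarrow> real"
  assumes J: "open J" "is_interval J" "J \<noteq> {}" "J \<subseteq> {-\<nu><..}"
    and f_smooth: "smooth_on_real J f"
    and q_smooth: "smooth3_on (cube J) q"
    and pde: "\<And>u i j. u \<in> cube J \<Longrightarrow>
       2 * (u$i - u$j) * pd j (pd i q) u = pd i q u - pd j q u"
    and diag: "\<And>x. x \<in> J \<Longrightarrow> q (vector [x, x, x]) = f x"
  shows "(\<forall>u i j. u \<in> cube J \<and> u$3 < u$2 \<and> u$2 < u$1 \<and> i \<noteq> j \<longrightarrow>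
            ((\<lambda>t. wfun \<nu> q i (u + t *\<^sub>R axis j 1)) has_real_derivative
               Bcoef \<nu> i j u * (wfun \<nu> q i u - wfun \<nu> q j u)) (at 0))
       \<and> (\<forall>u1 u3. u1 \<in> J \<and> u3 \<in> J \<and> u3 < u1 \<longrightarrow>
            wfun \<nu> q 1 (vector [u1, u1, u3]) = wfun \<nu> q 2 (vector [u1, u1, u3])
          \<and> wfun \<nu> q 3 (vector [u1, u1, u3]) = f u3
          \<and> wfun \<nu> q 1 (vector [u1, u3, u3]) = f u1
          \<and> wfun \<nu> q 2 (vector [u1, u3, u3]) = wfun \<nu> q 3 (vector [u1, u3, u3]))"
proof (intro conjI allI impI)
  fix u :: "real^3" and i j :: 3
  assume u: "u \<in> cube J \<and> u$3 < u$2 \<and> u$2 < u$1 \<and> i \<noteq> j"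
  then have "u \<in> ordered_region \<nu>"
    using J(4) by (auto simp: cube_def ordered_region_def)
  with u show "((\<lambda>t. wfun \<nu> q i (u + t *\<^sub>R axis j 1)) has_real_derivative
               Bcoef \<nu> i j u * (wfun \<nu> q i u - wfun \<nu> q j u)) (at 0)"
    by (intro has_real_derivative_wfun_axis[OF _ _ q_smooth] pde) auto
next
  fix u1 u3 assume "u1 \<in> J \<and> u3 \<in> J \<and> u3 < u1"
  then show "wfun \<nu> q 1 (vector [u1, u1, u3]) = wfun \<nu> q 2 (vector [u1, u1, u3])"
    "wfun \<nu> q 3 (vector [u1, u1, u3]) = f u3"
    "wfun \<nu> q 1 (vector [u1, u3, u3]) = f u1"
    "wfun \<nu> q 2 (vector [u1, u3, u3]) = wfun \<nu> q 3 (vector [u1, u3, u3])"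
    using wfun_on_face_12[OF J(1,2) q_smooth pde diag] wfun_on_face_23[OF J(1,2) q_smooth pde diag]
    by auto
qed

end
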